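(* Let $w$ and $w''$ be two words with nonnegative integer letters of the same length. If $\mathrm{Zero}\,w=\mathrm{Zero}\,w''$ and $\mathrm{DES}\,\mathrm{Pos}\,w=\mathrm{DES}\,\mathrm{Pos}\,w''$, then $\mathrm{Zero}\,{\bf F}_3(w)=\mathrm{Zero}\,{\bf F}_3(w'')$.
   Context: For a word $w=x_1\cdots x_n$ with nonnegative integer letters: $\mathrm{DES}\,w=\{i:1\le i\le n-1,\ x_i>x_{i+1}\}$; $\mathrm{Zero}\,w=\{i:x_i=0\}$; $\mathrm{Pos}\,w$ is the subword of positive letters of $w$. The map ${\bf F}_3$ on all finite words with nonnegative letters is defined by induction on the length $n$. If $n\le1$, or if all letters of $w$ other than the last are $0$, then ${\bf F}_3(w)=w$. Otherwise write uniquely $w=w'a0^rb$, where $a\ge1$ is the rightmost positive letter among the first $n-1$ letters, $r\ge0$, $b\ge0$ is the last letter and $w'$ is a possibly empty word. (1) If $a\le b$: ${\bf F}_3(w)={\bf F}_3(w'a0^r)\,b$. (2) If $a>b$ and $r\ge1$: writing ${\bf F}_3(w'a0^r)=w''c$ with $c$ a letter, ${\bf F}_3(w)=0\,w''\,b$. (3) If $a>b$ and $r=0$: writing ${\bf F}_3(w'a)=0^{m_1}x_1v_10^{m_2}x_2v_2\cdots0^{m_k}x_kv_k$ with $m_1\ge0$, $m_2,\dots,m_k\ge1$, $x_1,\dots,x_k$ positive letters and $v_1,\dots,v_k$ possibly empty words of positive letters, ${\bf F}_3(w)=x_10^{m_1}v_1x_20^{m_2}v_2\cdots x_k0^{m_k}v_k\,b$.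 *)

theory Defs
  imports Main
begin

(* Words are lists of natural numbers; positions are 1-indexed as in the paper. *)

definition DES :: "nat list \<Rightarrow> nat set" where
  "DES w = {i. 1 \<le> i \<and> i \<le> length w - 1 \<and> w ! (i - 1) > w ! i}"

definition Zero :: "nat list \<Rightarrow> nat set" where
  "Zero w = {i. 1 \<le> i \<and> i \<le> length w \<and> w ! (i - 1) = 0}"

definition Pos :: "nat list \<Rightarrow> nat list" where
  "Pos w = filter (\<lambda>x. 0 < x) w"

(* The block transformation of case (3):
   0^{m1} x1 v1 0^{m2} x2 v2 ... 0^{mk} xk vk  \<mapsto>  x1 0^{m1} v1 x2 0^{m2} v2 ... xk 0^{mk} vk.
   Blocks are: a maximal run of zeros, a positive letter x, then a maximal run of positive letters v.
   (A trailing run of zeros, which never arises in the use below, is left unchanged.) *)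
function swapblocks :: "nat list \<Rightarrow> nat list" where
  "swapblocks l =
     (let zs = takeWhile (\<lambda>x. x = 0) l; rest = dropWhile (\<lambda>x. x = 0) l in
      if rest = [] then l
      else hd rest # zs @ takeWhile (\<lambda>x. 0 < x) (tl rest)
             @ swapblocks (dropWhile (\<lambda>x. 0 < x) (tl rest)))"
  by auto
termination
proof (relation "measure length")
  fix l :: "nat list" and zs rest
  assume "zs = takeWhile (\<lambda>x. x = 0) l" "rest = dropWhile (\<lambda>x. x = 0) l" "rest \<noteq> []"
  then have "length (tl rest) < length rest" by simp
  moreover have "length rest \<le> length l"
    using \<open>rest = _\<close> length_dropWhile_le by simp
  moreover have "length (dropWhile (\<lambda>x. 0 < x) (tl rest)) \<le> length (tl rest)"
    by (rule length_dropWhile_le)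
  ultimately have "length (dropWhile (\<lambda>x. 0 < x) (tl rest)) < length l" by linarith
  then show "(dropWhile (\<lambda>x. 0 < x) (tl rest), l) \<in> measure length" by simp
qed simp

(* The map F_3, defined by induction on the length.  With u = butlast w = w' a 0^r, b = last w. *)
function F3 :: "nat list \<Rightarrow> nat list" where
  "F3 w =
    (if length w \<le> 1 \<or> (\<forall>x\<in>set (butlast w). x = 0) then w
     else
       (let u = butlast w; b = last w;
            r = length (takeWhile (\<lambda>x. x = 0) (rev u));
            a = u ! (length u - r - 1)
        in if a \<le> b then F3 u @ [b]
           else if 1 \<le> r then 0 # butlast (F3 u) @ [b]
           else swapblocks (F3 u) @ [b]))"
  by auto
termination
  by (relation "measure length") auto

end

theory Submission
  imports Defs
begin

(*
  The zero pattern and the descents of Pos u are determined by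
  those of w, so by induction the zero pattern of F3 u is determined as well.  So is the
  case distinction of F3: the letter a is the last letter of Pos u, hence a <= b iff b is
  positive and the last two letters of Pos w form no descent, and r >= 1 iff u ends with
  a zero.  Finally each case builds F3 w from F3 u by appending b, by shifting in a zero,
  or by the block swap, and the zero pattern of the block swap of a word depends only on
  the zero pattern of that word.
*)

declare F3.simps[simp del] swapblocks.simps[simp del]

definition zero_mask :: "nat list \<Rightarrow> bool list" where
  "zero_mask w = map (\<lambda>x. x = 0) w"

lemma zero_mask_simps [simp]:
  "zero_mask [] = []"
  "zero_mask (x # xs) = (x = 0) # zero_mask xs"
  "zero_mask (xs @ ys) = zero_mask xs @ zero_mask ys"
  "zero_mask (butlast xs) = butlast (zero_mask xs)"
  "length (zero_mask xs) = length xs"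
  by (simp_all add: zero_mask_def map_butlast)

lemma zero_mask_eq_Nil_iff [simp]: "zero_mask xs = [] \<longleftrightarrow> xs = []"
  by (simp add: zero_mask_def)

lemma zero_mask_takeWhile_dropWhile [simp]:
  "zero_mask (takeWhile (\<lambda>x. x = 0) xs) = takeWhile id (zero_mask xs)"
  "zero_mask (dropWhile (\<lambda>x. x = 0) xs) = dropWhile id (zero_mask xs)"
  "zero_mask (takeWhile (\<lambda>x. 0 < x) xs) = takeWhile Not (zero_mask xs)"
  "zero_mask (dropWhile (\<lambda>x. 0 < x) xs) = dropWhile Not (zero_mask xs)"
  by (induction xs) auto

lemma ex_nonzero_iff_zero_mask: "(\<exists>x\<in>set u. x \<noteq> 0) \<longleftrightarrow> False \<in> set (zero_mask u)"
  by (auto simp: zero_mask_def)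

lemma last_zero_mask: "u \<noteq> [] \<Longrightarrow> last (zero_mask u) \<longleftrightarrow> last u = 0"
  by (simp add: zero_mask_def last_map)

lemma Zero_conv_zero_mask:
  "Zero w = {i. 1 \<le> i \<and> i \<le> length (zero_mask w) \<and> zero_mask w ! (i - 1)}"
  by (auto simp: Zero_def zero_mask_def)

lemma Zero_eq_iff_zero_mask_eq:
  assumes "length w = length w''"
  shows "Zero w = Zero w'' \<longleftrightarrow> zero_mask w = zero_mask w''"
proof
  assume Zero_eq: "Zero w = Zero w''"
  show "zero_mask w = zero_mask w''"
  proof (rule nth_equalityI)
    fix i assume "i < length (zero_mask w)"
    then have "zero_mask w ! i \<longleftrightarrow> Suc i \<in> Zero w" "zero_mask w'' ! i \<longleftrightarrow> Suc i \<in> Zero w''"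
      using assms by (auto simp: Zero_conv_zero_mask)
    then show "zero_mask w ! i = zero_mask w'' ! i"
      using Zero_eq by simp
  qed (simp add: assms)
qed (simp add: Zero_conv_zero_mask)

lemma length_Pos_cong:
  assumes "zero_mask u = zero_mask v"
  shows "length (Pos u) = length (Pos v)"
proof -
  have "length (Pos w) = length (filter Not (zero_mask w))" for w
    by (simp add: Pos_def zero_mask_def filter_map comp_def)
  with assms show ?thesis
    by simp
qed

lemma zero_mask_swapblocks_cong:
  "zero_mask v = zero_mask v' \<Longrightarrow> zero_mask (swapblocks v) = zero_mask (swapblocks v')"
proof (induction v arbitrary: v' rule: swapblocks.induct)
  case (1 l)
  let ?rest = "dropWhile (\<lambda>x. x = 0)"
  have rest_mask: "zero_mask (?rest l) = zero_mask (?rest v')"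
    using "1.prems" by (simp only: zero_mask_takeWhile_dropWhile)
  show ?case
  proof (cases "?rest l = []")
    case True
    then have "?rest v' = []"
      using rest_mask by (metis zero_mask_eq_Nil_iff)
    with True "1.prems" show ?thesis
      by (subst (1 2) swapblocks.simps) (simp only: Let_def simp_thms if_True)
  next
    case False
    then obtain a t where l: "?rest l = a # t"
      by (meson neq_Nil_conv)
    have "?rest v' \<noteq> []"
      using False rest_mask by (metis zero_mask_eq_Nil_iff)
    then obtain a' t' where v': "?rest v' = a' # t'"
      by (meson neq_Nil_conv)
    have "zero_mask (a # t) = zero_mask (a' # t')"
      using rest_mask unfolding l v' .
    then have "(a = 0) = (a' = 0)" and t: "zero_mask t = zero_mask t'"
      by simp_all
    moreover have "zero_mask (swapblocks (dropWhile (\<lambda>x. 0 < x) t)) =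
        zero_mask (swapblocks (dropWhile (\<lambda>x. 0 < x) t'))"
      using "1.IH"[OF refl refl False, of "dropWhile (\<lambda>x. 0 < x) t'"] t
      unfolding l by simp
    ultimately show ?thesis
      using "1.prems" by (subst (1 2) swapblocks.simps) (simp add: Let_def l v')
  qed
qed

lemma DES_snoc_restrict: "DES xs = {i \<in> DES (xs @ [y]). i < length xs}"
proof (rule set_eqI)
  fix i
  show "i \<in> DES xs \<longleftrightarrow> i \<in> {i \<in> DES (xs @ [y]). i < length xs}"
    unfolding DES_def by (cases "i < length xs") (auto simp: nth_append)
qed

lemma DES_Pos_snoc: "DES (Pos u) = {i \<in> DES (Pos (u @ [b])). i < length (Pos u)}"
proof (cases "b = 0")
  case True
  then have "Pos (u @ [b]) = Pos u"
    by (simp add: Pos_def)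
  moreover have "i < length (Pos u)" if "i \<in> DES (Pos u)" for i
    using that by (simp add: DES_def, arith)
  ultimately show ?thesis by (intro set_eqI) auto
next
  case False
  then have "Pos (u @ [b]) = Pos u @ [b]"
    by (simp add: Pos_def)
  then show ?thesis
    using DES_snoc_restrict[of "Pos u" b] by simp
qed

lemma last_descent_iff:
  assumes "xs \<noteq> []"
  shows "length xs \<in> DES (xs @ [y]) \<longleftrightarrow> y < last xs"
  using assms by (cases xs rule: rev_cases) (simp_all add: DES_def nth_append)

lemma last_Pos_le_iff:
  assumes "\<exists>x\<in>set u. x \<noteq> 0"
  shows "last (Pos u) \<le> b \<longleftrightarrow> b \<noteq> 0 \<and> length (Pos (u @ [b])) - 1 \<notin> DES (Pos (u @ [b]))"
proof -
  have "Pos u \<noteq> []"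
    using assms by (auto simp: Pos_def filter_empty_conv)
  then have "last (Pos u) \<noteq> 0"
    using last_in_set[of "Pos u"] by (auto simp: Pos_def)
  show ?thesis
  proof (cases "b = 0")
    case True
    with \<open>last (Pos u) \<noteq> 0\<close> show ?thesis by simp
  next
    case False
    then have "Pos (u @ [b]) = Pos u @ [b]"
      by (simp add: Pos_def)
    with False show ?thesis
      using last_descent_iff[OF \<open>Pos u \<noteq> []\<close>, of b] by auto
  qed
qed

lemma nth_last_nonzero_eq_last_Pos:
  assumes "\<exists>x\<in>set u. x \<noteq> 0"
  shows "u ! (length u - length (takeWhile (\<lambda>x. x = 0) (rev u)) - 1) = last (Pos u)"
proof -
  define zs where "zs = takeWhile (\<lambda>x. x = 0) (rev u)"
  define rest where "rest = dropWhile (\<lambda>x. x = 0) (rev u)"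
  have "rest \<noteq> []"
    using assms by (auto simp: rest_def)
  then obtain a rest' where rest: "rest = a # rest'" and "a \<noteq> 0"
    using hd_dropWhile[of "\<lambda>x. x = 0" "rev u"] by (cases rest) (auto simp: rest_def)
  have "rev u = zs @ a # rest'"
    using takeWhile_dropWhile_id[of "\<lambda>x. x = 0" "rev u"] by (simp add: zs_def rest_def[symmetric] rest)
  then have u: "u = rev rest' @ a # rev zs"
    by (metis rev_append rev_rev_ident rev.simps append_assoc append_Cons append_Nil)
  have "Pos (rev zs) = []"
    by (auto simp: Pos_def zs_def filter_empty_conv dest: set_takeWhileD)
  then have "last (Pos u) = a"
    using \<open>a \<noteq> 0\<close> by (simp add: u Pos_def)
  then show ?thesis
    by (subst (1 2) u) (simp add: zs_def[symmetric] nth_append)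
qed

lemma one_le_length_trailing_zeros_iff:
  "u \<noteq> [] \<Longrightarrow> 1 \<le> length (takeWhile (\<lambda>x. x = 0) (rev u)) \<longleftrightarrow> last u = 0"
  by (cases u rule: rev_cases) auto

lemma F3_snoc_all_zero:
  "\<forall>x\<in>set u. x = 0 \<Longrightarrow> F3 (u @ [b]) = u @ [b]"
  by (subst F3.simps) simp

lemma F3_snoc:
  assumes "\<exists>x\<in>set u. x \<noteq> 0"
  shows "F3 (u @ [b]) =
    (if last (Pos u) \<le> b then F3 u @ [b]
     else if last u = 0 then 0 # butlast (F3 u) @ [b]
     else swapblocks (F3 u) @ [b])"
proof -
  have nontrivial: "\<not> (length (u @ [b]) \<le> 1 \<or> (\<forall>x\<in>set u. x = 0))"
    using assms by auto
  have "u \<noteq> []"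
    using assms by auto
  show ?thesis
    by (subst F3.simps) (simp only: butlast_snoc last_snoc if_not_P[OF nontrivial] Let_def
        nth_last_nonzero_eq_last_Pos[OF assms] one_le_length_trailing_zeros_iff[OF \<open>u \<noteq> []\<close>])
qed

lemma zero_mask_F3_cong:
  "zero_mask w = zero_mask w'' \<Longrightarrow> DES (Pos w) = DES (Pos w'') \<Longrightarrow>
    zero_mask (F3 w) = zero_mask (F3 w'')"
proof (induction w arbitrary: w'' rule: rev_induct)
  case Nil
  then have "w'' = []"
    by (metis zero_mask_eq_Nil_iff)
  then show ?case by simp
next
  case (snoc b u)
  obtain u'' b'' where w'': "w'' = u'' @ [b'']"
    using snoc.prems(1) by (cases w'' rule: rev_cases) auto
  have mask_u: "zero_mask u = zero_mask u''" and zero_b: "b = 0 \<longleftrightarrow> b'' = 0"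
    using snoc.prems(1) by (simp_all add: w'')
  have "DES (Pos u) = DES (Pos u'')"
    using DES_Pos_snoc[of u b] DES_Pos_snoc[of u'' b''] snoc.prems(2) length_Pos_cong[OF mask_u]
    by (simp add: w'')
  with mask_u have IH: "zero_mask (F3 u) = zero_mask (F3 u'')"
    by (rule snoc.IH)
  show ?case
  proof (cases "\<exists>x\<in>set u. x \<noteq> 0")
    case False
    then have "\<not> (\<exists>x\<in>set u''. x \<noteq> 0)"
      using mask_u by (metis ex_nonzero_iff_zero_mask)
    with False show ?thesis
      using snoc.prems(1) by (simp add: w'' F3_snoc_all_zero)
  next
    case True
    then have True'': "\<exists>x\<in>set u''. x \<noteq> 0"
      using mask_u by (metis ex_nonzero_iff_zero_mask)
    have "last (Pos u) \<le> b \<longleftrightarrow> last (Pos u'') \<le> b''"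
      using last_Pos_le_iff[OF True, of b] last_Pos_le_iff[OF True'', of b'']
        snoc.prems length_Pos_cong[OF snoc.prems(1)] zero_b
      by (simp add: w'')
    moreover have "last u = 0 \<longleftrightarrow> last u'' = 0"
    proof -
      have "u \<noteq> []" "u'' \<noteq> []"
        using True True'' by auto
      then show ?thesis
        by (metis last_zero_mask mask_u)
    qed
    ultimately show ?thesis
      using IH zero_mask_swapblocks_cong[OF IH] zero_b
      by (simp add: w'' F3_snoc[OF True] F3_snoc[OF True''])
  qed
qed

theorem proposition4p1:
  fixes w w'' :: "nat list"
  assumes "length w = length w''"
    and "Zero w = Zero w''"
    and "DES (Pos w) = DES (Pos w'')"
  shows "Zero (F3 w) = Zero (F3 w'')"
proof -
  have "zero_mask w = zero_mask w''"
    using assms(1,2) by (simp add: Zero_eq_iff_zero_mask_eq)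
  then have "zero_mask (F3 w) = zero_mask (F3 w'')"
    using assms(3) by (rule zero_mask_F3_cong)
  then show ?thesis
    by (simp add: Zero_conv_zero_mask)
qed

end
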